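(* Let $p$ be a prime and $\ell\ge1$. Let $\mathbb H\subseteq GL_n$ be a $\mathbb Q$-algebraic subgroup and let $\rho:\mathbb G\to\mathbb H$ be an isomorphism of $\mathbb Q$-algebraic groups. Let $\Gamma\le\mathbb G(\mathbb Q)$ be the image of $BS(1,p^\ell)$ under the standard embedding, i.e. $\Gamma=\left\{\begin{pmatrix}p^{\ell k}&r\\0&1\end{pmatrix}:k\in\mathbb Z,\ r\in\mathbb Z[1/p]\right\}$. Then $\rho(\Gamma)$ has the congruence subgroup property: every finite-index subgroup $K$ of $\rho(\Gamma)$ contains $\rho(\Gamma)(M)$ for some integer $M>1$ coprime to $p$.
   Context: $\mathbb G=\mathbb G_a\rtimes\mathbb G_m$ is the affine group, viewed as the $\mathbb Q$-algebraic subgroup of $GL_2$ consisting of matrices $\begin{pmatrix}x&y\\0&1\end{pmatrix}$ with $x$ invertible. For a subgroup $\Lambda\le GL_n(\mathbb Q)$ and an integer $M>0$ coprime to $p$, $\Lambda(M)$ denotes the set of $g\in\Lambda\cap GL_n(\mathbb Z[1/p])$ with $g\equiv\mathbf 1_n\pmod{M\mathbb Z[1/p]}$ entrywise, i.e. the intersection of $\Lambda$ with the kernel of reduction $GL_n(\mathbb Z[1/p])\to GL_n(\mathbb Z/M\mathbb Z)$. *)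

theory Defs
  imports "HOL-Analysis.Analysis" "HOL-Computational_Algebra.Primes"
begin

definition Zp_inv :: "nat \<Rightarrow> rat set" where
  "Zp_inv p = {q. \<exists>(a::int) (m::nat). q = of_int a / of_nat p ^ m}"

text \<open>Regular functions on the affine group G = Ga x| Gm, i.e. elements of
  Q[x, x^-1, y], evaluated at the point (x,y) (matrix [[x,y],[0,1]]), x nonzero.\<close>
definition regular_on_G :: "(rat \<Rightarrow> rat \<Rightarrow> rat) \<Rightarrow> bool" where
  "regular_on_G f \<longleftrightarrow> (\<exists>(N::nat) (c :: nat \<Rightarrow> nat \<Rightarrow> rat).
     \<forall>x y. x \<noteq> 0 \<longrightarrow>
       f x y = (\<Sum>i\<le>N. \<Sum>j\<le>2*N. c i j * x powi (int j - int N) * y ^ i))"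

definition regular_on_GL :: "(rat^'n^'n \<Rightarrow> rat) \<Rightarrow> bool" where
  "regular_on_GL g \<longleftrightarrow> (\<exists>(S :: ('n \<Rightarrow> 'n \<Rightarrow> nat) set) (c :: ('n \<Rightarrow> 'n \<Rightarrow> nat) \<Rightarrow> rat) (k::nat).
     finite S \<and> (\<forall>A. det A \<noteq> 0 \<longrightarrow>
       g A = (\<Sum>e\<in>S. c e * (\<Prod>i\<in>UNIV. \<Prod>j\<in>UNIV. (A$i$j) ^ (e i j))) / det A ^ k))"

text \<open>rho (given on points (x,y) of G) is an isomorphism of Q-algebraic groups from G
  onto a Q-algebraic subgroup H of GL_n (namely its image): a morphism of varieties
  G -> GL_n, a group homomorphism, with a regular left inverse defined on GL_n.\<close>
definition alg_group_embedding :: "(rat \<Rightarrow> rat \<Rightarrow> rat^'n^'n) \<Rightarrow> bool" where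
  "alg_group_embedding \<rho> \<longleftrightarrow>
     (\<forall>i j. regular_on_G (\<lambda>x y. \<rho> x y $ i $ j)) \<and>
     (\<forall>x y. x \<noteq> 0 \<longrightarrow> invertible (\<rho> x y)) \<and>
     (\<forall>x1 y1 x2 y2. x1 \<noteq> 0 \<longrightarrow> x2 \<noteq> 0 \<longrightarrow>
        \<rho> x1 y1 ** \<rho> x2 y2 = \<rho> (x1 * x2) (x1 * y2 + y1)) \<and>
     (\<exists>\<psi>1 \<psi>2. regular_on_GL \<psi>1 \<and> regular_on_GL \<psi>2 \<and>
        (\<forall>x y. x \<noteq> 0 \<longrightarrow> \<psi>1 (\<rho> x y) = x \<and> \<psi>2 (\<rho> x y) = y))"

definition rho_Gamma :: "(rat \<Rightarrow> rat \<Rightarrow> rat^'n^'n) \<Rightarrow> nat \<Rightarrow> nat \<Rightarrow> (rat^'n^'n) set" where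
  "rho_Gamma \<rho> p l = {\<rho> ((of_nat p ^ l) powi k) r | k r. r \<in> Zp_inv p}"

definition mat_subgroup :: "(rat^'n^'n) set \<Rightarrow> bool" where
  "mat_subgroup K \<longleftrightarrow> mat 1 \<in> K \<and> (\<forall>a\<in>K. \<forall>b\<in>K. a ** b \<in> K) \<and>
     (\<forall>a\<in>K. \<exists>b\<in>K. a ** b = mat 1 \<and> b ** a = mat 1)"

definition finite_index :: "(rat^'n^'n) set \<Rightarrow> (rat^'n^'n) set \<Rightarrow> bool" where
  "finite_index K L \<longleftrightarrow> finite {(\<lambda>k. g ** k) ` K | g. g \<in> L}"

definition GL_Zp :: "nat \<Rightarrow> (rat^'n^'n) set" where
  "GL_Zp p = {A. (\<forall>i j. A$i$j \<in> Zp_inv p) \<and>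
     (\<exists>B. (\<forall>i j. B$i$j \<in> Zp_inv p) \<and> A ** B = mat 1 \<and> B ** A = mat 1)}"

definition cong_sub :: "nat \<Rightarrow> (rat^'n^'n) set \<Rightarrow> int \<Rightarrow> (rat^'n^'n) set" where
  "cong_sub p \<Lambda> M = {g \<in> \<Lambda> \<inter> GL_Zp p.
     \<forall>i j. \<exists>r\<in>Zp_inv p. g$i$j - (mat 1 :: rat^'n^'n)$i$j = of_int M * r}"

end

theory Submission
  imports Defs "HOL-Number_Theory.Cong"
begin

(* Let N be the number of left cosets of K in rho(Gamma).  By the pigeonhole principle, for every
   one-parameter family f : nat -> rho(Gamma) of invertible matrices with f (i + j) = f i f j some
   f d with 1 <= d <= N lies in K, hence so does f (N!).  Applied to translations and dilations this
   puts rho(1, F' r) into K for all r in Z[1/p], where F' is the p-free part of N!, and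
   rho(q^(N! s), 0) for all integers s, where q = p^l.
   The inverse of rho is given by regular functions psi1, psi2 on GL_n; clearing the denominators of
   their coefficients up to powers of p yields D coprime to p such that rho(x, y) = 1 mod D M forces
   x = 1 and y = 0 mod M in Z[1/p].  Choosing M divisible by F' and by q^(N!) - 1, the congruence
   for y puts rho(1, y) into K, while for x = q^k it gives q^(N!) - 1 | q^|k| - 1, hence N! | k and
   rho(x, 0) is in K; so rho(x, y) = rho(1, y) rho(x, 0) is in K. *)

section \<open>The ring \<open>\<int>[1/p]\<close>\<close>

lemma Zp_inv_of_int [simp]: "of_int a \<in> Zp_inv p"
  unfolding Zp_inv_def by (rule CollectI, rule exI[of _ a], rule exI[of _ 0]) simp

lemma Zp_inv_of_nat [simp]: "of_nat a \<in> Zp_inv p"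
  using Zp_inv_of_int[of "int a" p] by simp

lemma Zp_inv_0 [simp]: "0 \<in> Zp_inv p" and Zp_inv_1 [simp]: "1 \<in> Zp_inv p"
  using Zp_inv_of_int[of 0 p] Zp_inv_of_int[of 1 p] by simp_all

lemma Zp_inv_add: assumes "p > 0" "a \<in> Zp_inv p" "b \<in> Zp_inv p" shows "a + b \<in> Zp_inv p"
proof -
  from assms obtain a' m b' n where a: "a = of_int a' / of_nat p ^ m" and b: "b = of_int b' / of_nat p ^ n"
    unfolding Zp_inv_def by auto
  from assms(1) have "a + b = of_int (a' * int p ^ n + b' * int p ^ m) / of_nat p ^ (m + n)"
    by (simp add: a b field_simps power_add)
  then show ?thesis unfolding Zp_inv_def by blast
qed

lemma Zp_inv_mult: assumes "p > 0" "a \<in> Zp_inv p" "b \<in> Zp_inv p" shows "a * b \<in> Zp_inv p"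
proof -
  from assms obtain a' m b' n where a: "a = of_int a' / of_nat p ^ m" and b: "b = of_int b' / of_nat p ^ n"
    unfolding Zp_inv_def by auto
  from assms(1) have "a * b = of_int (a' * b') / of_nat p ^ (m + n)"
    by (simp add: a b field_simps power_add)
  then show ?thesis unfolding Zp_inv_def by blast
qed

lemma Zp_inv_uminus: assumes "a \<in> Zp_inv p" shows "- a \<in> Zp_inv p"
proof -
  from assms obtain a' m where "a = of_int a' / of_nat p ^ m" unfolding Zp_inv_def by auto
  then have "- a = of_int (- a') / of_nat p ^ m" by simp
  then show ?thesis unfolding Zp_inv_def by blast
qed

lemma Zp_inv_diff: "p > 0 \<Longrightarrow> a \<in> Zp_inv p \<Longrightarrow> b \<in> Zp_inv p \<Longrightarrow> a - b \<in> Zp_inv p"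
  using Zp_inv_add[of p a "- b"] Zp_inv_uminus[of b p] by simp

lemma Zp_inv_divide_power: assumes "a \<in> Zp_inv p" shows "a / of_nat p ^ n \<in> Zp_inv p"
proof -
  from assms obtain a' m where "a = of_int a' / of_nat p ^ m" unfolding Zp_inv_def by auto
  then have "a / of_nat p ^ n = of_int a' / of_nat p ^ (m + n)" by (simp add: power_add)
  then show ?thesis unfolding Zp_inv_def by blast
qed

lemma Zp_inv_power: "p > 0 \<Longrightarrow> a \<in> Zp_inv p \<Longrightarrow> a ^ n \<in> Zp_inv p"
  by (induction n) (auto intro: Zp_inv_mult)

lemma Zp_inv_powi: "(of_nat p ^ l :: rat) powi k \<in> Zp_inv p"
proof (cases "k \<ge> 0")
  case True
  then have "(of_nat p ^ l :: rat) powi k = of_nat (p ^ (l * nat k))"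
    by (simp add: power_int_def power_mult)
  then show ?thesis by (metis Zp_inv_of_nat)
next
  case False
  then have "(of_nat p ^ l :: rat) powi k = of_int 1 / of_nat p ^ (l * nat (- k))"
    by (simp add: power_int_def power_mult power_inverse divide_inverse)
  then show ?thesis unfolding Zp_inv_def by blast
qed

lemma Zp_inv_int_dvd:
  assumes "p > 0" "coprime M (int p)" "of_int a = of_int M * s" "s \<in> Zp_inv p"
  shows "M dvd a"
proof -
  from assms(4) obtain b m where "s = of_int b / of_nat p ^ m" unfolding Zp_inv_def by auto
  with assms(1,3) have "of_int (a * int p ^ m) = (of_int (M * b) :: rat)" by simp
  then have "M dvd a * int p ^ m" unfolding of_int_eq_iff by (metis dvd_triv_left)
  with assms(2) show ?thesis by (simp add: coprime_dvd_mult_left_iff)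
qed

lemma Zp_inv_clear_denominator:
  assumes "prime p"
  obtains D :: nat where "D > 0" "coprime D p" "of_nat D * q \<in> Zp_inv p"
proof -
  obtain a b where ab: "quotient_of q = (a, b)" by (cases "quotient_of q")
  have "b > 0" using quotient_of_denom_pos[OF ab] .
  define m where "m = multiplicity p (nat b)"
  obtain D where D: "nat b = p ^ m * D" "\<not> p dvd D"
    unfolding m_def by (rule multiplicity_decompose'[where x = "nat b" and p = p])
      (use \<open>b > 0\<close> assms in \<open>auto simp: not_prime_unit\<close>)
  have "D > 0" using D(1) \<open>b > 0\<close> by (cases D) simp_all
  have "coprime D p" using D(2) assms by (metis prime_imp_coprime coprime_commute)
  have "(of_int b :: rat) = of_nat (nat b)" using \<open>b > 0\<close> by simp
  also have "\<dots> = of_nat p ^ m * of_nat D" unfolding D(1) by simp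
  finally have "of_nat D * q = of_int a / of_nat p ^ m"
    using \<open>D > 0\<close> assms unfolding quotient_of_div[OF ab] by (simp add: field_simps prime_gt_0_nat)
  then have "of_nat D * q \<in> Zp_inv p" unfolding Zp_inv_def by blast
  with \<open>D > 0\<close> \<open>coprime D p\<close> that show ?thesis by blast
qed

lemma Zp_inv_clear_denominators:
  assumes "prime p" "finite S"
  obtains D :: nat where "D > 0" "coprime D p" "\<And>e. e \<in> S \<Longrightarrow> of_nat D * c e \<in> Zp_inv p"
  using assms(2) that
proof (induction arbitrary: thesis rule: finite_induct)
  case empty
  show ?case by (rule empty.prems[of 1]) auto
next
  case (insert x S)
  obtain D where D: "D > 0" "coprime D p" "\<And>e. e \<in> S \<Longrightarrow> of_nat D * c e \<in> Zp_inv p"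
    using insert.IH by blast
  obtain E where E: "E > 0" "coprime E p" "of_nat E * c x \<in> Zp_inv p"
    using Zp_inv_clear_denominator[OF assms(1)] by blast
  have "p > 0" using assms(1) prime_gt_0_nat by blast
  have cleared: "of_nat (E * D) * c e \<in> Zp_inv p" if "e \<in> insert x S" for e
  proof (cases "e = x")
    case True
    then show ?thesis using Zp_inv_mult[OF \<open>p > 0\<close> Zp_inv_of_nat E(3), of D] by (simp add: ac_simps)
  next
    case False
    then show ?thesis using that Zp_inv_mult[OF \<open>p > 0\<close> Zp_inv_of_nat D(3), of e E] by (simp add: ac_simps)
  qed
  show ?case
  proof (rule insert.prems)
    show "E * D > 0" "coprime (E * D) p" using D E by simp_all
  qed (fact cleared)
qed

section \<open>Congruences modulo \<open>M \<int>[1/p]\<close>\<close>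

definition zp_cong :: "nat \<Rightarrow> int \<Rightarrow> rat \<Rightarrow> rat \<Rightarrow> bool" where
  "zp_cong p M a b \<longleftrightarrow> a \<in> Zp_inv p \<and> b \<in> Zp_inv p \<and> (\<exists>r\<in>Zp_inv p. a - b = of_int M * r)"

lemma zp_cong_refl: "a \<in> Zp_inv p \<Longrightarrow> zp_cong p M a a"
  unfolding zp_cong_def by (auto intro: bexI[of _ 0])

lemma zp_cong_dvd:
  assumes "p > 0" "M dvd M'" "zp_cong p M' a b"
  shows "zp_cong p M a b"
proof -
  from assms(2) obtain t where t: "M' = M * t" by blast
  from assms(3) obtain r where r: "r \<in> Zp_inv p" "a - b = of_int M' * r"
    unfolding zp_cong_def by blast
  have "a - b = of_int M * (of_int t * r)" unfolding r(2) t by simp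
  moreover have "of_int t * r \<in> Zp_inv p" using Zp_inv_mult[OF assms(1) Zp_inv_of_int r(1)] .
  ultimately show ?thesis using assms(3) unfolding zp_cong_def by blast
qed

lemma zp_cong_add:
  assumes "p > 0" "zp_cong p M a b" "zp_cong p M c d"
  shows "zp_cong p M (a + c) (b + d)"
proof -
  from assms obtain r s where rs: "r \<in> Zp_inv p" "a - b = of_int M * r" "s \<in> Zp_inv p" "c - d = of_int M * s"
    unfolding zp_cong_def by auto
  have "a + c - (b + d) = of_int M * (r + s)" using rs(2,4) by (simp add: algebra_simps)
  moreover have "a + c \<in> Zp_inv p" "b + d \<in> Zp_inv p" "r + s \<in> Zp_inv p"
    using assms rs unfolding zp_cong_def by (simp_all add: Zp_inv_add)
  ultimately show ?thesis unfolding zp_cong_def by blast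
qed

lemma zp_cong_mult:
  assumes "p > 0" "zp_cong p M a b" "zp_cong p M c d"
  shows "zp_cong p M (a * c) (b * d)"
proof -
  from assms obtain r s where rs: "r \<in> Zp_inv p" "a - b = of_int M * r" "s \<in> Zp_inv p" "c - d = of_int M * s"
    unfolding zp_cong_def by auto
  have "a * c - b * d = a * (c - d) + (a - b) * d" by (simp add: algebra_simps)
  also have "\<dots> = of_int M * (a * s + r * d)" unfolding rs(2,4) by (simp add: algebra_simps)
  finally have "a * c - b * d = of_int M * (a * s + r * d)" .
  moreover have "a * c \<in> Zp_inv p" "b * d \<in> Zp_inv p" "a * s + r * d \<in> Zp_inv p"
    using assms rs unfolding zp_cong_def by (simp_all add: Zp_inv_add Zp_inv_mult)
  ultimately show ?thesis unfolding zp_cong_def by blast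
qed

lemma zp_cong_sum:
  assumes "p > 0" "\<And>x. x \<in> A \<Longrightarrow> zp_cong p M (f x) (g x)"
  shows "zp_cong p M (sum f A) (sum g A)"
  using assms(2)
  by (induction A rule: infinite_finite_induct) (auto intro: zp_cong_add zp_cong_refl assms(1))

lemma zp_cong_prod:
  assumes "p > 0" "\<And>x. x \<in> A \<Longrightarrow> zp_cong p M (f x) (g x)"
  shows "zp_cong p M (prod f A) (prod g A)"
  using assms(2)
  by (induction A rule: infinite_finite_induct) (auto intro: zp_cong_mult zp_cong_refl assms(1))

lemma zp_cong_power: "p > 0 \<Longrightarrow> zp_cong p M a b \<Longrightarrow> zp_cong p M (a ^ n) (b ^ n)"
  by (induction n) (auto intro: zp_cong_mult zp_cong_refl)

lemma zp_cong_det: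
  fixes A B :: "rat^'n^'n"
  assumes "p > 0" "\<And>i j. zp_cong p M (A$i$j) (B$i$j)"
  shows "zp_cong p M (det A) (det B)"
  unfolding det_def by (intro zp_cong_sum zp_cong_mult zp_cong_prod zp_cong_refl assms) simp_all

lemma regular_on_GL_zp_cong:
  fixes \<psi> :: "rat^'n^'n \<Rightarrow> rat"
  assumes "prime p" "regular_on_GL \<psi>"
  obtains D :: nat where "D > 0" "coprime D p"
    "\<And>M g. (\<And>i j. zp_cong p (int D * M) (g$i$j) (mat 1$i$j)) \<Longrightarrow> det g \<noteq> 0 \<Longrightarrow>
       \<psi> g \<in> Zp_inv p \<Longrightarrow> \<psi> (mat 1) \<in> Zp_inv p \<Longrightarrow> zp_cong p M (\<psi> g) (\<psi> (mat 1))"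
proof -
  have "p > 0" using assms(1) prime_gt_0_nat by blast
  obtain S c k where "finite S" and \<psi>:
    "\<And>A. det A \<noteq> 0 \<Longrightarrow> \<psi> A = (\<Sum>e\<in>S. c e * (\<Prod>i\<in>UNIV. \<Prod>j\<in>UNIV. (A$i$j) ^ e i j)) / det A ^ k"
    using assms(2) unfolding regular_on_GL_def by blast
  obtain D where D: "D > 0" "coprime D p" "\<And>e. e \<in> S \<Longrightarrow> of_nat D * c e \<in> Zp_inv p"
    using Zp_inv_clear_denominators[OF assms(1) \<open>finite S\<close>] by blast
  define P where "P A = (\<Sum>e\<in>S. c e * (\<Prod>i\<in>UNIV. \<Prod>j\<in>UNIV. ((A::rat^'n^'n)$i$j) ^ e i j))" for A
  have D_P: "of_nat D * P A = (\<Sum>e\<in>S. (of_nat D * c e) * (\<Prod>i\<in>UNIV. \<Prod>j\<in>UNIV. (A$i$j) ^ e i j))" for A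
    unfolding P_def by (simp add: sum_distrib_left mult.assoc)
  have "zp_cong p M (\<psi> g) (\<psi> (mat 1))"
    if g: "\<And>i j. zp_cong p (int D * M) (g$i$j) (mat 1$i$j)" and "det g \<noteq> 0"
      and Zp: "\<psi> g \<in> Zp_inv p" "\<psi> (mat 1) \<in> Zp_inv p" for M g
  proof -
    have "zp_cong p (int D * M) (of_nat D * P g) (of_nat D * P (mat 1))"
      unfolding D_P
      by (intro zp_cong_sum zp_cong_mult zp_cong_prod zp_cong_power zp_cong_refl \<open>p > 0\<close> g D(3))
    then obtain r where "r \<in> Zp_inv p" "of_nat D * (P g - P (mat 1)) = of_nat D * (of_int M * r)"
      unfolding zp_cong_def by (auto simp: algebra_simps)
    with D(1) have r: "r \<in> Zp_inv p" "P g - P (mat 1) = of_int M * r" by simp_all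
    have "zp_cong p (int D * M) (det g ^ k) 1"
      using zp_cong_power[OF \<open>p > 0\<close> zp_cong_det[OF \<open>p > 0\<close> g], of k] by simp
    then obtain t where t: "t \<in> Zp_inv p" "det g ^ k - 1 = of_int (int D * M) * t"
      unfolding zp_cong_def by blast
    have \<psi>_g: "\<psi> g * det g ^ k = P g"
      using \<psi>[OF \<open>det g \<noteq> 0\<close>] \<open>det g \<noteq> 0\<close> unfolding P_def by simp
    have \<psi>_1: "\<psi> (mat 1) = P (mat 1)"
      using \<psi>[of "mat 1"] unfolding P_def by simp
    \<comment> \<open>clearing the denominator \<open>det g ^ k\<close> of \<open>\<psi> g\<close> costs only a multiple of \<open>D * M\<close>\<close>
    have "\<psi> g - \<psi> (mat 1) = (P g - P (mat 1)) - \<psi> g * (det g ^ k - 1)"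
      unfolding \<psi>_1 \<psi>_g[symmetric] by (simp add: algebra_simps)
    also have "\<dots> = of_int M * r - \<psi> g * (of_int (int D * M) * t)"
      by (simp only: r(2) t(2))
    also have "\<dots> = of_int M * (r - \<psi> g * of_nat D * t)"
      by (simp add: algebra_simps)
    finally have "\<psi> g - \<psi> (mat 1) = of_int M * (r - \<psi> g * of_nat D * t)" .
    moreover have "r - \<psi> g * of_nat D * t \<in> Zp_inv p"
      using Zp(1) r(1) t(1) \<open>p > 0\<close> by (simp add: Zp_inv_diff Zp_inv_mult)
    ultimately show ?thesis using Zp unfolding zp_cong_def by blast
  qed
  with D(1,2) that show ?thesis by blast
qed

lemma coprime_power_minus_one: "n > 0 \<Longrightarrow> coprime ((a::int) ^ n - 1) a"
  using coprime_diff_one_left[of "a ^ n"] by (simp add: coprime_power_right_iff)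

lemma power_minus_one_dvd_imp_dvd:
  fixes P :: int
  assumes "P \<ge> 2" "F \<ge> 1" "(P ^ F - 1) dvd (P ^ j - 1)"
  shows "F dvd j"
proof -
  define t where "t = j mod F"
  have one: "[P ^ F = 1] (mod P ^ F - 1)" by (simp add: cong_iff_dvd_diff)
  have "[(P ^ F) ^ (j div F) * P ^ t = 1 * P ^ t] (mod P ^ F - 1)"
    using cong_mult[OF cong_pow[OF one, of "j div F"] cong_refl[of "P ^ t"]] by simp
  moreover have "(P ^ F) ^ (j div F) * P ^ t = P ^ j"
    unfolding t_def by (simp flip: power_mult power_add)
  moreover have "[P ^ j = 1] (mod P ^ F - 1)" using assms(3) by (simp add: cong_iff_dvd_diff)
  ultimately have "[P ^ t = 1] (mod P ^ F - 1)"
    by (metis cong_sym cong_trans mult_1)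
  then have dvd: "(P ^ F - 1) dvd (P ^ t - 1)" by (simp add: cong_iff_dvd_diff)
  have "P ^ t < P ^ F"
    using assms(1,2) unfolding t_def by (intro power_strict_increasing) simp_all
  have "t = 0"
  proof (rule ccontr)
    assume "t \<noteq> 0"
    then have "1 < P ^ t" using assms(1) by (intro one_less_power) simp_all
    then have "P ^ t - 1 \<noteq> 0" by simp
    from dvd_imp_le_int[OF this dvd] \<open>P ^ t < P ^ F\<close> \<open>1 < P ^ t\<close> show False by arith
  qed
  then show ?thesis unfolding t_def by auto
qed

lemma zp_cong_powi_one_imp_dvd:
  fixes X :: int
  assumes "p > 0" "coprime M (int p)" "X \<noteq> 0" "zp_cong p M (of_int X powi k) 1"
  shows "M dvd X ^ nat \<bar>k\<bar> - 1"
proof -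
  obtain s where s: "s \<in> Zp_inv p" "of_int X powi k - 1 = of_int M * s"
    using assms(4) unfolding zp_cong_def by blast
  have "\<exists>s'\<in>Zp_inv p. of_int (X ^ nat \<bar>k\<bar> - 1) = of_int M * s'"
  proof (cases "k \<ge> 0")
    case True
    then show ?thesis using s by (auto simp: power_int_def)
  next
    case False
    \<comment> \<open>\<open>X\<^sup>j - 1 = - X\<^sup>j (X\<^sup>-\<^sup>j - 1)\<close>\<close>
    then have "of_int (X ^ nat \<bar>k\<bar> - 1) = of_int M * (- s * of_int X ^ nat \<bar>k\<bar>)"
      using s(2) assms(3) by (simp add: power_int_def power_inverse field_simps)
    moreover have "- s * of_int X ^ nat \<bar>k\<bar> \<in> Zp_inv p"
      using s(1) assms(1) by (simp add: Zp_inv_mult Zp_inv_uminus Zp_inv_power)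
    ultimately show ?thesis by blast
  qed
  then show ?thesis using Zp_inv_int_dvd[OF assms(1,2)] by blast
qed

section \<open>Subgroups of finite index\<close>

lemma invertible_mult_left_cancel:
  fixes A B C :: "'a::field^'n^'n"
  assumes "invertible A" "A ** B = A ** C"
  shows "B = C"
proof -
  obtain A' where "A' ** A = mat 1" using assms(1) invertible_left_inverse by blast
  then have "B = A' ** (A ** B)" "C = A' ** (A ** C)" by (simp_all add: matrix_mul_assoc)
  with assms(2) show ?thesis by simp
qed

lemma mat_subgroup_one: "mat_subgroup K \<Longrightarrow> mat 1 \<in> K"
  unfolding mat_subgroup_def by blast

lemma mat_subgroup_mult: "mat_subgroup K \<Longrightarrow> a \<in> K \<Longrightarrow> b \<in> K \<Longrightarrow> a ** b \<in> K"
  unfolding mat_subgroup_def by blast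

lemma mat_subgroup_right_inverse:
  assumes "mat_subgroup K" "a \<in> K" "a ** b = mat 1"
  shows "b \<in> K"
proof -
  obtain a' where "a' \<in> K" "a' ** a = mat 1" using assms(1,2) unfolding mat_subgroup_def by blast
  have "b = (a' ** a) ** b" using \<open>a' ** a = mat 1\<close> by simp
  also have "\<dots> = a'" using assms(3) by (simp flip: matrix_mul_assoc)
  finally show ?thesis using \<open>a' \<in> K\<close> by simp
qed

context
  fixes f :: "nat \<Rightarrow> rat^'n^'n"
  assumes f_add: "\<And>i j. f (i + j) = f i ** f j" and f_invertible: "\<And>i. invertible (f i)"
begin

lemma monoid_hom_zero: "f 0 = mat 1"
  using f_add[of 0 0] invertible_mult_left_cancel[OF f_invertible, of 0 "f 0" "mat 1"] by simp

lemma monoid_hom_multiple_mem: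
  assumes "mat_subgroup K" "f d \<in> K"
  shows "f (d * s) \<in> K"
proof (induction s)
  case 0
  show ?case using monoid_hom_zero mat_subgroup_one[OF assms(1)] by simp
next
  case (Suc s)
  then show ?case using f_add[of "d * s" d] mat_subgroup_mult[OF assms(1) _ assms(2)] by (simp add: add.commute)
qed

lemma monoid_hom_coset_pigeonhole:
  assumes "mat_subgroup K" "finite_index K L" "\<And>i. f i \<in> L"
  obtains d where "1 \<le> d" "d \<le> card {(\<lambda>k. g ** k) ` K | g. g \<in> L}" "f d \<in> K"
proof -
  define cosets where "cosets = {(\<lambda>k. g ** k) ` K | g. g \<in> L}"
  define coset where "coset i = (\<lambda>k. f i ** k) ` K" for i
  have "\<not> inj_on coset {0..card cosets}"
  proof
    assume "inj_on coset {0..card cosets}"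
    moreover have "coset ` {0..card cosets} \<subseteq> cosets"
      using assms(3) unfolding coset_def cosets_def by blast
    moreover have "finite cosets" using assms(2) unfolding finite_index_def cosets_def .
    ultimately have "card {0..card cosets} \<le> card cosets" by (rule card_inj_on_le)
    then show False by simp
  qed
  then obtain i j where ij: "i \<le> card cosets" "j \<le> card cosets" "i \<noteq> j" "coset i = coset j"
    unfolding inj_on_def by auto
  define i' j' where "i' = min i j" and "j' = max i j"
  have "i' < j'" "j' \<le> card cosets" "coset i' = coset j'"
    using ij unfolding i'_def j'_def by (auto simp: min_def max_def)
  then have "f j' \<in> coset i'"
    using mat_subgroup_one[OF assms(1)] unfolding coset_def by (auto intro: image_eqI[of _ _ "mat 1"])
  then obtain k where k: "k \<in> K" "f i' ** f (j' - i') = f i' ** k"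
    using f_add[of i' "j' - i'"] \<open>i' < j'\<close> unfolding coset_def by auto
  then have "f (j' - i') \<in> K" using invertible_mult_left_cancel[OF f_invertible k(2)] by simp
  moreover have "1 \<le> j' - i'" "j' - i' \<le> card cosets" using \<open>i' < j'\<close> \<open>j' \<le> card cosets\<close> by simp_all
  ultimately show ?thesis using that unfolding cosets_def by blast
qed

end

lemma finite_index_uniform_exponent:
  assumes "mat_subgroup K" "finite_index K L"
  obtains F :: nat where "F \<ge> 1"
    "\<And>f :: nat \<Rightarrow> rat^'n^'n. (\<And>i. f i \<in> L) \<Longrightarrow> (\<And>i j. f (i + j) = f i ** f j) \<Longrightarrow>
       (\<And>i. invertible (f i)) \<Longrightarrow> f F \<in> K"
proof -
  define N where "N = card {(\<lambda>k. g ** k) ` K | g. g \<in> L}"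
  have "f (fact N) \<in> K"
    if L: "\<And>i. f i \<in> L" and hom: "\<And>i j. f (i + j) = f i ** f j" "\<And>i. invertible (f i)"
    for f :: "nat \<Rightarrow> rat^'n^'n"
  proof -
    obtain d where "1 \<le> d" "d \<le> N" "f d \<in> K"
      using monoid_hom_coset_pigeonhole[of f K L] hom assms L unfolding N_def by blast
    moreover from this obtain s where "fact N = d * s" using dvd_fact by blast
    ultimately show ?thesis using monoid_hom_multiple_mem[of f K d s] hom assms(1) by simp
  qed
  with that[of "fact N"] show ?thesis by simp
qed

section \<open>Subgroups of finite index in \<open>\<rho>(\<Gamma>)\<close>\<close>

locale affine_embedding =
  fixes \<rho> :: "rat \<Rightarrow> rat \<Rightarrow> rat^'n^'n"
  assumes alg_group_embedding: "alg_group_embedding \<rho>"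
begin

lemma rho_mult: "x \<noteq> 0 \<Longrightarrow> x' \<noteq> 0 \<Longrightarrow> \<rho> x y ** \<rho> x' y' = \<rho> (x * x') (x * y' + y)"
  using alg_group_embedding unfolding alg_group_embedding_def by blast

lemma rho_invertible: "x \<noteq> 0 \<Longrightarrow> invertible (\<rho> x y)"
  using alg_group_embedding unfolding alg_group_embedding_def by blast

lemma rho_one: "\<rho> 1 0 = mat 1"
  using rho_mult[of 1 1 0 0] invertible_mult_left_cancel[OF rho_invertible, of 1 0 "\<rho> 1 0" "mat 1"]
  by simp

lemma rho_translation_add: "\<rho> 1 (y + y') = \<rho> 1 y ** \<rho> 1 y'"
  using rho_mult[of 1 1 y y'] by (simp add: add.commute)

lemma rho_dilation_mult: "x \<noteq> 0 \<Longrightarrow> x' \<noteq> 0 \<Longrightarrow> \<rho> (x * x') 0 = \<rho> x 0 ** \<rho> x' 0"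
  using rho_mult[of x x' 0 0] by simp

lemma rho_split: "x \<noteq> 0 \<Longrightarrow> \<rho> x y = \<rho> 1 y ** \<rho> x 0"
  using rho_mult[of 1 x y 0] by simp

lemma rho_coordinates_zp_cong:
  assumes "prime p"
  obtains D :: nat where "D > 0" "coprime D p"
    "\<And>M x y. x \<noteq> 0 \<Longrightarrow> x \<in> Zp_inv p \<Longrightarrow> y \<in> Zp_inv p \<Longrightarrow>
       (\<And>i j. zp_cong p (int D * M) (\<rho> x y $ i $ j) (mat 1 $ i $ j)) \<Longrightarrow>
       zp_cong p M x 1 \<and> zp_cong p M y 0"
proof -
  have "p > 0" using assms prime_gt_0_nat by blast
  obtain \<psi>\<^sub>1 \<psi>\<^sub>2 where "regular_on_GL \<psi>\<^sub>1" "regular_on_GL \<psi>\<^sub>2"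
    and \<psi>: "\<And>x y. x \<noteq> 0 \<Longrightarrow> \<psi>\<^sub>1 (\<rho> x y) = x \<and> \<psi>\<^sub>2 (\<rho> x y) = y"
    using alg_group_embedding unfolding alg_group_embedding_def by (elim conjE exE) blast
  obtain D\<^sub>1 where D\<^sub>1: "D\<^sub>1 > 0" "coprime D\<^sub>1 p"
    "\<And>M g. (\<And>i j. zp_cong p (int D\<^sub>1 * M) (g$i$j) (mat 1$i$j)) \<Longrightarrow> det g \<noteq> 0 \<Longrightarrow>
       \<psi>\<^sub>1 g \<in> Zp_inv p \<Longrightarrow> \<psi>\<^sub>1 (mat 1) \<in> Zp_inv p \<Longrightarrow> zp_cong p M (\<psi>\<^sub>1 g) (\<psi>\<^sub>1 (mat 1))"
    using regular_on_GL_zp_cong[OF assms \<open>regular_on_GL \<psi>\<^sub>1\<close>] by blast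
  obtain D\<^sub>2 where D\<^sub>2: "D\<^sub>2 > 0" "coprime D\<^sub>2 p"
    "\<And>M g. (\<And>i j. zp_cong p (int D\<^sub>2 * M) (g$i$j) (mat 1$i$j)) \<Longrightarrow> det g \<noteq> 0 \<Longrightarrow>
       \<psi>\<^sub>2 g \<in> Zp_inv p \<Longrightarrow> \<psi>\<^sub>2 (mat 1) \<in> Zp_inv p \<Longrightarrow> zp_cong p M (\<psi>\<^sub>2 g) (\<psi>\<^sub>2 (mat 1))"
    using regular_on_GL_zp_cong[OF assms \<open>regular_on_GL \<psi>\<^sub>2\<close>] by blast
  have coordinates: "zp_cong p M x 1 \<and> zp_cong p M y 0"
    if "x \<noteq> 0" "x \<in> Zp_inv p" "y \<in> Zp_inv p"
      and cong: "\<And>i j. zp_cong p (int (D\<^sub>1 * D\<^sub>2) * M) (\<rho> x y $ i $ j) (mat 1 $ i $ j)" for M x y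
  proof -
    have det: "det (\<rho> x y) \<noteq> 0" using rho_invertible[OF \<open>x \<noteq> 0\<close>] invertible_det_nz by blast
    have cong\<^sub>1: "zp_cong p (int D\<^sub>1 * M) (\<rho> x y $ i $ j) (mat 1 $ i $ j)"
      and cong\<^sub>2: "zp_cong p (int D\<^sub>2 * M) (\<rho> x y $ i $ j) (mat 1 $ i $ j)" for i j
      using zp_cong_dvd[OF \<open>p > 0\<close> _ cong[of i j]] by simp_all
    have \<psi>_xy: "\<psi>\<^sub>1 (\<rho> x y) = x" "\<psi>\<^sub>2 (\<rho> x y) = y" using \<psi>[OF \<open>x \<noteq> 0\<close>] by simp_all
    have \<psi>_1: "\<psi>\<^sub>1 (mat 1) = 1" "\<psi>\<^sub>2 (mat 1) = 0" using \<psi>[of 1 0] rho_one by simp_all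
    have "zp_cong p M (\<psi>\<^sub>1 (\<rho> x y)) (\<psi>\<^sub>1 (mat 1))"
      by (rule D\<^sub>1(3)[OF cong\<^sub>1 det]) (simp_all only: \<psi>_xy \<psi>_1 that(2) Zp_inv_1)
    moreover have "zp_cong p M (\<psi>\<^sub>2 (\<rho> x y)) (\<psi>\<^sub>2 (mat 1))"
      by (rule D\<^sub>2(3)[OF cong\<^sub>2 det]) (simp_all only: \<psi>_xy \<psi>_1 that(3) Zp_inv_0)
    ultimately show ?thesis unfolding \<psi>_xy \<psi>_1 ..
  qed
  show ?thesis
  proof (rule that)
    show "D\<^sub>1 * D\<^sub>2 > 0" "coprime (D\<^sub>1 * D\<^sub>2) p" using D\<^sub>1(1,2) D\<^sub>2(1,2) by simp_all
  qed (fact coordinates)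
qed

end

locale finite_index_subgroup = affine_embedding \<rho>
  for \<rho> :: "rat \<Rightarrow> rat \<Rightarrow> rat^'n^'n" +
  fixes p l :: nat and K :: "(rat^'n^'n) set"
  assumes prime: "prime p" and l_pos: "l \<ge> 1"
    and subgroup: "mat_subgroup K" and index_finite: "finite_index K (rho_Gamma \<rho> p l)"
begin

lemma p_pos: "p > 0"
  using prime prime_gt_0_nat by blast

lemma rho_Gamma_memI: "r \<in> Zp_inv p \<Longrightarrow> \<rho> ((of_nat p ^ l) powi k) r \<in> rho_Gamma \<rho> p l"
  unfolding rho_Gamma_def by blast

lemma translations_mem:
  obtains F :: nat where "F > 0" "coprime F p" "\<And>r. r \<in> Zp_inv p \<Longrightarrow> \<rho> 1 (of_nat F * r) \<in> K"
proof -
  obtain N :: nat where "N \<ge> 1" and N: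
    "\<And>f :: nat \<Rightarrow> rat^'n^'n. (\<And>i. f i \<in> rho_Gamma \<rho> p l) \<Longrightarrow> (\<And>i j. f (i + j) = f i ** f j) \<Longrightarrow>
       (\<And>i. invertible (f i)) \<Longrightarrow> f N \<in> K"
    using finite_index_uniform_exponent[OF subgroup index_finite] by blast
  have N_mem: "\<rho> 1 (of_nat N * r) \<in> K" if "r \<in> Zp_inv p" for r
  proof (rule N[of "\<lambda>i. \<rho> 1 (of_nat i * r)"])
    show "\<rho> 1 (of_nat i * r) \<in> rho_Gamma \<rho> p l" for i
      using rho_Gamma_memI[OF Zp_inv_mult[OF p_pos Zp_inv_of_nat that], where k = 0] by simp
    show "\<rho> 1 (of_nat (i + j) * r) = \<rho> 1 (of_nat i * r) ** \<rho> 1 (of_nat j * r)" for i j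
      by (simp add: rho_translation_add distrib_right)
    show "invertible (\<rho> 1 (of_nat i * r))" for i
      by (simp add: rho_invertible)
  qed
  \<comment> \<open>the \<open>p\<close>-part of \<open>N\<close> is absorbed by \<open>r\<close>, which may be divided by powers of \<open>p\<close>\<close>
  obtain F where F: "N = p ^ multiplicity p N * F" "\<not> p dvd F"
    by (rule multiplicity_decompose'[where x = N and p = p])
      (use \<open>N \<ge> 1\<close> prime in \<open>auto simp: not_prime_unit\<close>)
  show ?thesis
  proof
    show "F > 0" using F(1) \<open>N \<ge> 1\<close> by (cases F) simp_all
    show "coprime F p" using F(2) prime by (metis prime_imp_coprime coprime_commute)
    show "\<rho> 1 (of_nat F * r) \<in> K" if "r \<in> Zp_inv p" for r
      using N_mem[OF Zp_inv_divide_power[OF that, of "multiplicity p N"]] p_pos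
      by (subst (asm) F(1)) simp
  qed
qed

lemma dilations_mem:
  obtains F :: nat where "F \<ge> 1" "\<And>s. \<rho> ((of_nat p ^ l) powi (int F * s)) 0 \<in> K"
proof -
  define q :: rat where "q = of_nat p ^ l"
  have "q \<noteq> 0" unfolding q_def using p_pos by simp
  obtain F :: nat where "F \<ge> 1" and F:
    "\<And>f :: nat \<Rightarrow> rat^'n^'n. (\<And>i. f i \<in> rho_Gamma \<rho> p l) \<Longrightarrow> (\<And>i j. f (i + j) = f i ** f j) \<Longrightarrow>
       (\<And>i. invertible (f i)) \<Longrightarrow> f F \<in> K"
    using finite_index_uniform_exponent[OF subgroup index_finite] by blast
  have hom: "\<rho> (q ^ (i + j)) 0 = \<rho> (q ^ i) 0 ** \<rho> (q ^ j) 0" for i j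
    using \<open>q \<noteq> 0\<close> by (simp add: power_add rho_dilation_mult)
  have inv: "invertible (\<rho> (q ^ i) 0)" for i
    using \<open>q \<noteq> 0\<close> by (simp add: rho_invertible)
  have "\<rho> (q ^ F) 0 \<in> K"
  proof (rule F[of "\<lambda>i. \<rho> (q ^ i) 0"])
    show "\<rho> (q ^ i) 0 \<in> rho_Gamma \<rho> p l" for i
      using rho_Gamma_memI[OF Zp_inv_0, of "int i"] unfolding q_def by simp
  qed (fact hom inv)+
  then have nat_mem: "\<rho> (q ^ (F * n)) 0 \<in> K" for n
    using monoid_hom_multiple_mem[of "\<lambda>i. \<rho> (q ^ i) 0", OF hom inv subgroup] by simp
  have "\<rho> (q powi (int F * s)) 0 \<in> K" for s
  proof (cases "s \<ge> 0")
    case True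
    then have "int F * s = int (F * nat s)" by simp
    then show ?thesis using nat_mem[of "nat s"] by (simp only: power_int_of_nat)
  next
    case False
    have "\<rho> (q ^ (F * nat (- s))) 0 ** \<rho> (inverse (q ^ (F * nat (- s)))) 0 = mat 1"
      using \<open>q \<noteq> 0\<close> by (simp add: rho_mult rho_one)
    then have "\<rho> (inverse (q ^ (F * nat (- s)))) 0 \<in> K"
      by (rule mat_subgroup_right_inverse[OF subgroup nat_mem])
    moreover have "int F * s = - int (F * nat (- s))" using False by simp
    then have "q powi (int F * s) = inverse (q ^ (F * nat (- s)))"
      by (simp only: power_int_minus power_int_of_nat)
    ultimately show ?thesis by (simp only:)
  qed
  with \<open>F \<ge> 1\<close> that show ?thesis unfolding q_def by blast
qed

lemma base_ge_2: "int p ^ l \<ge> 2"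
proof -
  have "p ^ 1 \<le> p ^ l" using prime_gt_1_nat[OF prime] l_pos by (intro power_increasing) simp_all
  with prime_gt_1_nat[OF prime] have "int 2 \<le> int (p ^ l)" by (simp only: of_nat_le_iff) simp
  then show ?thesis by simp
qed

lemma cong_sub_subset:
  assumes translation_mem: "\<And>r. r \<in> Zp_inv p \<Longrightarrow> \<rho> 1 (of_nat F' * r) \<in> K"
    and dilation_mem: "\<And>s. \<rho> ((of_nat p ^ l) powi (int F * s)) 0 \<in> K" and "F \<ge> 1"
    and coordinates_cong: "\<And>M x y. x \<noteq> 0 \<Longrightarrow> x \<in> Zp_inv p \<Longrightarrow> y \<in> Zp_inv p \<Longrightarrow>
       (\<And>i j. zp_cong p (int D * M) (\<rho> x y $ i $ j) (mat 1 $ i $ j)) \<Longrightarrow>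
       zp_cong p M x 1 \<and> zp_cong p M y 0"
    and "int F' dvd M" "(int p ^ l) ^ F - 1 dvd M" "coprime M (int p)"
  shows "cong_sub p (rho_Gamma \<rho> p l) (int D * M) \<subseteq> K"
proof
  fix g assume g: "g \<in> cong_sub p (rho_Gamma \<rho> p l) (int D * M)"
  then obtain k y where g_eq: "g = \<rho> ((of_nat p ^ l) powi k) y" and "y \<in> Zp_inv p"
    unfolding cong_sub_def rho_Gamma_def by blast
  define x where "x = (of_nat p ^ l :: rat) powi k"
  have "x \<noteq> 0" "x \<in> Zp_inv p" using p_pos Zp_inv_powi unfolding x_def by simp_all
  have "zp_cong p (int D * M) (g $ i $ j) (mat 1 $ i $ j)" for i j
    using g unfolding cong_sub_def GL_Zp_def zp_cong_def by (auto simp: mat_def)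
  then have "zp_cong p M x 1" "zp_cong p M y 0"
    using coordinates_cong[OF \<open>x \<noteq> 0\<close> \<open>x \<in> Zp_inv p\<close> \<open>y \<in> Zp_inv p\<close>] unfolding g_eq x_def by blast+
  obtain t where "t \<in> Zp_inv p" "y = of_int M * t"
    using \<open>zp_cong p M y 0\<close> unfolding zp_cong_def by auto
  moreover obtain m where "M = int F' * m" using \<open>int F' dvd M\<close> by blast
  ultimately have "\<rho> 1 y \<in> K"
    using translation_mem[OF Zp_inv_mult[OF p_pos Zp_inv_of_int \<open>t \<in> Zp_inv p\<close>], of m] by (simp add: mult.assoc)
  have "M dvd (int p ^ l) ^ nat \<bar>k\<bar> - 1"
    using zp_cong_powi_one_imp_dvd[OF p_pos \<open>coprime M (int p)\<close>, of "int p ^ l" k] \<open>zp_cong p M x 1\<close> p_pos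
    unfolding x_def by simp
  then have "F dvd nat \<bar>k\<bar>"
    using power_minus_one_dvd_imp_dvd[OF base_ge_2 \<open>F \<ge> 1\<close>] dvd_trans \<open>(int p ^ l) ^ F - 1 dvd M\<close> by blast
  then have "int F dvd k" using int_dvd_int_iff[of F "nat \<bar>k\<bar>"] by simp
  then obtain s where "k = int F * s" by blast
  then have "\<rho> x 0 \<in> K" using dilation_mem unfolding x_def by simp
  with \<open>\<rho> 1 y \<in> K\<close> show "g \<in> K"
    using mat_subgroup_mult[OF subgroup] rho_split[OF \<open>x \<noteq> 0\<close>] unfolding g_eq x_def by metis
qed

lemma modulus_gt_1:
  assumes "D > 0" "F' > 0" "F \<ge> 1"
  shows "int D * (int F' * ((int p ^ l) ^ F - 1) * (int p + 1)) > 1"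
proof -
  define A where "A = int D * int F' * ((int p ^ l) ^ F - 1)"
  have "(int p ^ l) ^ F > 1" using base_ge_2 assms(3) by (intro one_less_power[of "int p ^ l"]) simp_all
  then have "A > 0" using assms(1,2) unfolding A_def by simp
  then have "int p + 1 \<le> A * (int p + 1)" using mult_right_mono[of 1 A "int p + 1"] by simp
  moreover have "int D * (int F' * ((int p ^ l) ^ F - 1) * (int p + 1)) = A * (int p + 1)"
    unfolding A_def by (simp add: ac_simps)
  ultimately show ?thesis using p_pos by linarith
qed

lemma exists_congruence_subgroup:
  "\<exists>M::int. M > 1 \<and> coprime M (int p) \<and> cong_sub p (rho_Gamma \<rho> p l) M \<subseteq> K"
proof -
  obtain F' where F': "F' > 0" "coprime F' p" "\<And>r. r \<in> Zp_inv p \<Longrightarrow> \<rho> 1 (of_nat F' * r) \<in> K"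
    using translations_mem by blast
  obtain F where F: "F \<ge> 1" "\<And>s. \<rho> ((of_nat p ^ l) powi (int F * s)) 0 \<in> K"
    using dilations_mem by blast
  obtain D where D: "D > 0" "coprime D p"
    "\<And>M x y. x \<noteq> 0 \<Longrightarrow> x \<in> Zp_inv p \<Longrightarrow> y \<in> Zp_inv p \<Longrightarrow>
       (\<And>i j. zp_cong p (int D * M) (\<rho> x y $ i $ j) (mat 1 $ i $ j)) \<Longrightarrow>
       zp_cong p M x 1 \<and> zp_cong p M y 0"
    using rho_coordinates_zp_cong[OF prime] by blast
  \<comment> \<open>the factor \<open>p + 1\<close> only serves to make the modulus exceed 1\<close>
  define M where "M = int F' * ((int p ^ l) ^ F - 1) * (int p + 1)"
  have "coprime ((int p ^ l) ^ F - 1) (int p)"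
    using coprime_power_minus_one[of "l * F" "int p"] F(1) l_pos by (simp add: power_mult)
  with F'(2) have "coprime M (int p)" unfolding M_def by simp
  then have "coprime (int D * M) (int p)" using D(2) by simp
  moreover have "int D * M > 1"
    using modulus_gt_1 D(1) F'(1) F(1) unfolding M_def by blast
  moreover have "cong_sub p (rho_Gamma \<rho> p l) (int D * M) \<subseteq> K"
    by (rule cong_sub_subset[OF F'(3) F(2) F(1) D(3) _ _ \<open>coprime M (int p)\<close>]) (simp_all add: M_def)
  ultimately show ?thesis by blast
qed

end

theorem proposition1p6:
  fixes p l :: nat and \<rho> :: "rat \<Rightarrow> rat \<Rightarrow> rat^'n^'n"
  assumes "prime p" and "l \<ge> 1" and "alg_group_embedding \<rho>"
  shows "\<forall>K. K \<subseteq> rho_Gamma \<rho> p l \<and> mat_subgroup K \<and> finite_index K (rho_Gamma \<rho> p l) \<longrightarrow>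
           (\<exists>M::int. M > 1 \<and> coprime M (int p) \<and> cong_sub p (rho_Gamma \<rho> p l) M \<subseteq> K)"
proof (intro allI impI, elim conjE)
  fix K assume "mat_subgroup K" "finite_index K (rho_Gamma \<rho> p l)"
  with assms interpret finite_index_subgroup \<rho> p l K
    by (intro finite_index_subgroup.intro affine_embedding.intro finite_index_subgroup_axioms.intro)
  show "\<exists>M::int. M > 1 \<and> coprime M (int p) \<and> cong_sub p (rho_Gamma \<rho> p l) M \<subseteq> K"
    by (rule exists_congruence_subgroup)
qed

end
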